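(* Let $T_0$ be a Steiner tree of the regular $d$-simplex, and let $\{T_k\}_{k\ge 0}$ be the sequence of Steiner trees of regular simplices obtained by repeatedly applying the doubling procedure to $T_0$ (so $T_k$ is a Steiner tree of the regular $2^kd$-simplex). Let $\ell_k$ denote the Steiner ratio of $T_k$, i.e. the cost of $T_k$ divided by the cost $(2^kd-1)\sqrt2$ of a minimum spanning tree of its terminals. If $\lim_{k\to\infty}\ell_k$ exists, then \[\lim_{k\to\infty}\ell_k=\frac{\sqrt3}{\sqrt2\,(2\sqrt2-1)}.\]
   Context: The regular $n$-simplex refers to the terminal set of standard basis vectors $\mathbf{e_1},\dots,\mathbf{e_n}\in\mathbb{R}^n$ (pairwise distance $\sqrt2$). A Steiner tree of a finite terminal set $P$ is a tree with vertex set $P\cup S$, $S$ a finite set of Steiner points, with Euclidean edge lengths; its cost is its total length. For $\mathbf{x}\in\mathbb{R}^m$, the split of $\mathbf{x}$ is $\left(\frac{x_1}{2},\frac{x_1}{2},\dots,\frac{x_m}{2},\frac{x_m}{2}\right)\in\mathbb{R}^{2m}$. The Fermat point of a triangle with all angles less than $120^\circ$ is the interior point at which each pair of vertices subtends $120^\circ$. Doubling procedure: given a Steiner tree $T$ of the regular $m$-simplex with Steiner point set $S$ in which each terminal is a leaf adjacent to a Steiner point, form $T'$ on terminals $\mathbf{e_1},\dots,\mathbf{e_{2m}}\in\mathbb{R}^{2m}$ by (1) taking the split $\mathbf{s'}$ of each $\mathbf{s}\in S$ as a Steiner point; (2) joining $\mathbf{r'},\mathbf{s'}$ whenever $\mathbf{r},\mathbf{s}\in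 S$ are adjacent in $T$; (3) for each terminal $\mathbf{e_i}$ of $T$ with adjacent Steiner point $\mathbf{s_i}$, adding the Fermat point $\mathbf{x_i}$ of the triangle $\mathbf{e_{2i-1}}\mathbf{e_{2i}}\mathbf{s'_i}$ as a Steiner point; (4) adding edges $(\mathbf{e_{2i-1}},\mathbf{x_i}),(\mathbf{e_{2i}},\mathbf{x_i}),(\mathbf{x_i},\mathbf{s'_i})$. It is implicitly assumed that $T_0$ is such that the procedure can be applied repeatedly (all required Fermat points exist). *)

theory Defs
  imports Complex_Main
begin

text \<open>Points of R^n are represented as functions nat => real; only the
coordinates 0..n-1 are used (indices are 0-based, so the paper's e_i is basis (i-1)).\<close>

type_synonym point = "nat \<Rightarrow> real"

text \<open>Vertices of a Steiner tree: Inl i is the terminal e_i, Inr j is the j-th Steiner point.\<close>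
type_synonym vtx = "nat + nat"

record stree =
  dim :: nat                      \<comment> \<open>number of terminals = ambient dimension\<close>
  nst :: nat
  spt :: "nat \<Rightarrow> point"
  edges :: "(vtx \<times> vtx) set"     \<comment> \<open>each undirected edge listed once, in some orientation\<close>

definition basis :: "nat \<Rightarrow> point" where
  "basis i = (\<lambda>j. if j = i then 1 else 0)"

definition ip :: "nat \<Rightarrow> point \<Rightarrow> point \<Rightarrow> real" where
  "ip n x y = (\<Sum>i<n. x i * y i)"

definition enorm :: "nat \<Rightarrow> point \<Rightarrow> real" where
  "enorm n x = sqrt (ip n x x)"

definition edist :: "nat \<Rightarrow> point \<Rightarrow> point \<Rightarrow> real" where
  "edist n x y = enorm n (\<lambda>i. x i - y i)"

definition verts :: "stree \<Rightarrow> vtx set" where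
  "verts T = Inl ` {..<dim T} \<union> Inr ` {..<nst T}"

definition vpos :: "stree \<Rightarrow> vtx \<Rightarrow> point" where
  "vpos T v = (case v of Inl i \<Rightarrow> basis i | Inr j \<Rightarrow> spt T j)"

definition adj :: "stree \<Rightarrow> vtx \<Rightarrow> vtx \<Rightarrow> bool" where
  "adj T u v \<longleftrightarrow> (u, v) \<in> edges T \<or> (v, u) \<in> edges T"

definition is_steiner_tree :: "stree \<Rightarrow> bool" where
  "is_steiner_tree T \<longleftrightarrow>
     (\<forall>j<nst T. \<forall>i\<ge>dim T. spt T j i = 0) \<and>
     finite (edges T) \<and> edges T \<subseteq> verts T \<times> verts T \<and>
     (\<forall>u v. (u, v) \<in> edges T \<longrightarrow> u \<noteq> v \<and> (v, u) \<notin> edges T) \<and>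
     (\<forall>u\<in>verts T. \<forall>v\<in>verts T. (u, v) \<in> (edges T \<union> (edges T)\<inverse>)\<^sup>*) \<and>
     card (edges T) + 1 = card (verts T)"

definition cost :: "stree \<Rightarrow> real" where
  "cost T = (\<Sum>(u, v)\<in>edges T. edist (dim T) (vpos T u) (vpos T v))"

definition steiner_ratio :: "stree \<Rightarrow> real" where
  "steiner_ratio T = cost T / ((real (dim T) - 1) * sqrt 2)"

definition terminals_leaves :: "stree \<Rightarrow> bool" where
  "terminals_leaves T \<longleftrightarrow>
     (\<forall>i<dim T. \<exists>j<nst T. \<forall>v. adj T (Inl i) v \<longleftrightarrow> v = Inr j)"

definition sadj :: "stree \<Rightarrow> nat \<Rightarrow> nat" where
  "sadj T i = (THE j. adj T (Inl i) (Inr j))"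

definition split :: "nat \<Rightarrow> point \<Rightarrow> point" where
  "split m x = (\<lambda>j. if j < 2 * m then x (j div 2) / 2 else 0)"

text \<open>x is the Fermat point of triangle abc in R^n: each pair of vertices subtends
120 degrees at x (cosine of the angle equals -1/2).\<close>
definition fermat_point :: "nat \<Rightarrow> point \<Rightarrow> point \<Rightarrow> point \<Rightarrow> point \<Rightarrow> bool" where
  "fermat_point n a b c x \<longleftrightarrow>
     (let u = (\<lambda>i. a i - x i); v = (\<lambda>i. b i - x i); w = (\<lambda>i. c i - x i) in
       enorm n u \<noteq> 0 \<and> enorm n v \<noteq> 0 \<and> enorm n w \<noteq> 0 \<and>
       ip n u v = - (1/2) * enorm n u * enorm n v \<and>
       ip n v w = - (1/2) * enorm n v * enorm n w \<and>
       ip n w u = - (1/2) * enorm n w * enorm n u)"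

text \<open>Steiner points of T' are
numbered: j < nst T is the split of Steiner point j of T; nst T + i is the Fermat
point x_i belonging to terminal i of T.  Terminals 2i, 2i+1 of T' replace terminal i.\<close>
definition is_doubling :: "stree \<Rightarrow> stree \<Rightarrow> bool" where
  "is_doubling T T' \<longleftrightarrow>
     terminals_leaves T \<and>
     dim T' = 2 * dim T \<and> nst T' = nst T + dim T \<and>
     (\<forall>j<nst T. spt T' j = split (dim T) (spt T j)) \<and>
     (\<forall>i<dim T. fermat_point (dim T') (basis (2 * i)) (basis (2 * i + 1))
                  (split (dim T) (spt T (sadj T i))) (spt T' (nst T + i))) \<and>
     edges T' = {(Inr a, Inr b) | a b. (Inr a, Inr b) \<in> edges T} \<union>
       (\<Union>i<dim T. {(Inl (2 * i), Inr (nst T + i)), (Inl (2 * i + 1), Inr (nst T + i)),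
                    (Inr (nst T + i), Inr (sadj T i))})"

end

theory Submission
  imports Defs
begin

text \<open>Doubling shrinks every edge between Steiner points by the factor \<open>1/\<surd>2\<close>, since the
split map scales distances by \<open>1/\<surd>2\<close>. A terminal edge of length \<open>t\<close> is replaced by a Fermat
gadget: by the law of cosines at \<open>120\<degree>\<close> its two new terminal legs have length \<open>\<surd>(2/3)\<close>
and the third leg has length \<open>(\<surd>2 t - \<surd>(2/3))/2\<close>, in total \<open>t/\<surd>2 + \<surd>(3/2)\<close>. Hence the
costs of the trees with \<open>n\<^sub>k = 2\<^sup>k d\<close> terminals satisfy
\<open>c\<^sub>k\<^sub>+\<^sub>1 = c\<^sub>k/\<surd>2 + \<surd>(3/2) n\<^sub>k\<close>, so \<open>c\<^sub>k/2\<^sup>k\<close> obeys a contracting affine recurrence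
with ratio \<open>1/(2\<surd>2)\<close>, and the Steiner ratio \<open>c\<^sub>k/((n\<^sub>k - 1)\<surd>2)\<close> converges to
\<open>\<surd>(3/2)/(2\<surd>2 - 1)\<close>.\<close>

lemma ip_self_nonneg: "0 \<le> ip n x x"
  unfolding ip_def by (auto intro: sum_nonneg)

lemma ip_diff_self:
  "ip n (\<lambda>i. x i - y i) (\<lambda>i. x i - y i) = ip n x x - 2 * ip n x y + ip n y y"
  unfolding ip_def by (simp add: algebra_simps sum.distrib sum_subtractf sum_distrib_left)

lemma ip_basis_left: "j < n \<Longrightarrow> ip n (basis j) y = y j"
  by (simp add: ip_def basis_def if_distrib[where f = "\<lambda>c. c * _"] cong: if_cong)

lemma ip_split_split: "ip (2 * m) (split m x) (split m y) = ip m x y / 2"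
proof -
  have "(\<Sum>j<2 * m. f j) = (\<Sum>i<m. f (2 * i) + f (2 * i + 1))" for f :: "nat \<Rightarrow> real"
    by (induction m) (auto simp: lessThan_Suc)
  then show ?thesis
    unfolding ip_def split_def by (simp add: sum_divide_distrib)
qed

lemma edist_nonneg: "0 \<le> edist n x y"
  unfolding edist_def enorm_def using ip_self_nonneg by simp

lemma edist_sq: "(edist n x y)\<^sup>2 = ip n (\<lambda>i. x i - y i) (\<lambda>i. x i - y i)"
  unfolding edist_def enorm_def using ip_self_nonneg by simp

lemma edist_commute: "edist n x y = edist n y x"
  unfolding edist_def enorm_def ip_def by (simp add: algebra_simps)

lemma edist_split_split: "edist (2 * m) (split m x) (split m y) = edist m x y / sqrt 2"
proof -
  have diff: "(\<lambda>i. split m x i - split m y i) = split m (\<lambda>i. x i - y i)"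
    by (auto simp: split_def fun_eq_iff diff_divide_distrib)
  show ?thesis
    unfolding edist_def enorm_def diff ip_split_split by (simp add: real_sqrt_divide)
qed

lemma edist_basis_sq: "j < n \<Longrightarrow> (edist n (basis j) y)\<^sup>2 = 1 - 2 * y j + ip n y y"
  unfolding edist_sq ip_diff_self by (simp add: ip_basis_left) (simp add: basis_def)

lemma edist_basis_basis: "j < n \<Longrightarrow> k < n \<Longrightarrow> j \<noteq> k \<Longrightarrow> edist n (basis j) (basis k) = sqrt 2"
  using edist_basis_sq[of j n "basis k"] edist_nonneg[of n "basis j" "basis k"]
  by (simp add: ip_basis_left) (simp add: basis_def real_sqrt_unique)

lemma edist_sq_if_angle_120:
  assumes "ip n (\<lambda>i. a i - x i) (\<lambda>i. b i - x i) = - (1/2) * edist n a x * edist n b x"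
  shows "(edist n a b)\<^sup>2 = (edist n a x)\<^sup>2 + edist n a x * edist n b x + (edist n b x)\<^sup>2"
proof -
  have "(\<lambda>i. a i - b i) = (\<lambda>i. (a i - x i) - (b i - x i))"
    by simp
  then have "(edist n a b)\<^sup>2 = ip n (\<lambda>i. (a i - x i) - (b i - x i)) (\<lambda>i. (a i - x i) - (b i - x i))"
    by (simp only: edist_sq)
  also have "\<dots> = (edist n a x)\<^sup>2 - 2 * ip n (\<lambda>i. a i - x i) (\<lambda>i. b i - x i) + (edist n b x)\<^sup>2"
    by (simp only: ip_diff_self edist_sq)
  finally show ?thesis
    using assms by simp
qed

lemma fermat_point_iff_edist:
  "fermat_point n a b c x \<longleftrightarrow>
     edist n a x \<noteq> 0 \<and> edist n b x \<noteq> 0 \<and> edist n c x \<noteq> 0 \<and>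
     ip n (\<lambda>i. a i - x i) (\<lambda>i. b i - x i) = - (1/2) * edist n a x * edist n b x \<and>
     ip n (\<lambda>i. b i - x i) (\<lambda>i. c i - x i) = - (1/2) * edist n b x * edist n c x \<and>
     ip n (\<lambda>i. c i - x i) (\<lambda>i. a i - x i) = - (1/2) * edist n c x * edist n a x"
  unfolding fermat_point_def edist_def Let_def ..

lemma fermat_point_law_of_cosines:
  assumes "fermat_point n a b c x"
  shows "(edist n a b)\<^sup>2 = (edist n a x)\<^sup>2 + edist n a x * edist n b x + (edist n b x)\<^sup>2"
    and "(edist n b c)\<^sup>2 = (edist n b x)\<^sup>2 + edist n b x * edist n c x + (edist n c x)\<^sup>2"
    and "(edist n c a)\<^sup>2 = (edist n c x)\<^sup>2 + edist n c x * edist n a x + (edist n a x)\<^sup>2"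
  using assms unfolding fermat_point_iff_edist by (auto intro: edist_sq_if_angle_120)

lemma fermat_point_legs_eq_if_isosceles:
  assumes F: "fermat_point n a b c x" and iso: "edist n a c = edist n b c"
  shows "edist n a x = edist n b x"
proof -
  define p q r where "p = edist n a x" and "q = edist n b x" and "r = edist n c x"
  have "r > 0"
    using F edist_nonneg[of n c x] unfolding fermat_point_iff_edist r_def by simp
  have "(p - q) * (p + q + r) = (edist n c a)\<^sup>2 - (edist n b c)\<^sup>2"
    unfolding fermat_point_law_of_cosines[OF F] p_def q_def r_def
    by (simp add: power2_eq_square algebra_simps)
  also have "\<dots> = 0"
    using iso by (simp add: edist_commute)
  finally show ?thesis
    using \<open>r > 0\<close> edist_nonneg[of n a x] edist_nonneg[of n b x]
    unfolding p_def q_def by (simp add: add_nonneg_pos)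
qed

lemma edist_basis_split_sq:
  assumes "j < 2 * m"
  shows "(edist (2 * m) (basis j) (split m s))\<^sup>2 = (1 + (edist m (basis (j div 2)) s)\<^sup>2) / 2"
proof -
  have "split m s j = s (j div 2) / 2" and "j div 2 < m"
    using assms by (auto simp: split_def)
  then show ?thesis
    using assms by (simp add: edist_basis_sq ip_split_split)
qed

lemma fermat_point_doubling_edists:
  assumes "i < m"
    and F: "fermat_point (2 * m) (basis (2 * i)) (basis (2 * i + 1)) (split m s) x"
  shows "edist (2 * m) (basis (2 * i)) x = sqrt (2/3)"
    and "edist (2 * m) (basis (2 * i + 1)) x = sqrt (2/3)"
    and "edist (2 * m) x (split m s) = (sqrt 2 * edist m (basis i) s - sqrt (2/3)) / 2"
proof -
  define p q r t where "p = edist (2 * m) (basis (2 * i)) x"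
    and "q = edist (2 * m) (basis (2 * i + 1)) x" and "r = edist (2 * m) (split m s) x"
    and "t = edist m (basis i) s"
  have legs: "(edist (2 * m) (basis j) (split m s))\<^sup>2 = (1 + t\<^sup>2) / 2"
    if "j = 2 * i \<or> j = 2 * i + 1" for j
    using that \<open>i < m\<close> edist_basis_split_sq[of j m s] unfolding t_def by auto
  have "(edist (2 * m) (basis (2 * i)) (split m s))\<^sup>2 = (edist (2 * m) (basis (2 * i + 1)) (split m s))\<^sup>2"
    using legs[of "2 * i"] legs[of "2 * i + 1"] by simp
  then have "p = q"
    unfolding p_def q_def power2_eq_iff_nonneg[OF edist_nonneg edist_nonneg]
    by (rule fermat_point_legs_eq_if_isosceles[OF F])
  have "(sqrt 2)\<^sup>2 = p\<^sup>2 + p * q + q\<^sup>2"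
    using fermat_point_law_of_cosines(1)[OF F] \<open>i < m\<close>
    by (simp add: edist_basis_basis p_def q_def)
  then have "p\<^sup>2 = 2/3"
    using \<open>p = q\<close> by (simp add: power2_eq_square)
  then have p: "p = sqrt (2/3)"
    using edist_nonneg[of "2 * m" "basis (2 * i)" x] unfolding p_def by (simp add: real_sqrt_unique)
  have "(1 + t\<^sup>2) / 2 = r\<^sup>2 + r * p + p\<^sup>2"
    using fermat_point_law_of_cosines(3)[OF F] legs[of "2 * i"]
    by (simp add: edist_commute p_def r_def)
  then have "(2 * r + p)\<^sup>2 = (sqrt 2 * t)\<^sup>2"
    using \<open>p\<^sup>2 = 2/3\<close> by (simp add: power2_eq_square algebra_simps)
  then have "2 * r + p = sqrt 2 * t"
    using edist_nonneg unfolding p_def r_def t_def by (simp add: power2_eq_iff_nonneg)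
  then show "edist (2 * m) x (split m s) = (sqrt 2 * edist m (basis i) s - sqrt (2/3)) / 2"
    using p by (simp add: edist_commute r_def t_def)
  show "edist (2 * m) (basis (2 * i)) x = sqrt (2/3)"
    using p p_def by simp
  show "edist (2 * m) (basis (2 * i + 1)) x = sqrt (2/3)"
    using p \<open>p = q\<close> q_def by simp
qed

definition edge_length :: "stree \<Rightarrow> vtx \<times> vtx \<Rightarrow> real" where
  "edge_length T = (\<lambda>(u, v). edist (dim T) (vpos T u) (vpos T v))"

definition steiner_edges :: "stree \<Rightarrow> (vtx \<times> vtx) set" where
  "steiner_edges T = {(Inr a, Inr b) | a b. (Inr a, Inr b) \<in> edges T}"

definition steiner_cost :: "stree \<Rightarrow> real" where
  "steiner_cost T = sum (edge_length T) (steiner_edges T)"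

definition terminal_cost :: "stree \<Rightarrow> real" where
  "terminal_cost T = (\<Sum>i<dim T. edist (dim T) (basis i) (spt T (sadj T i)))"

definition well_formed_edges :: "stree \<Rightarrow> bool" where
  "well_formed_edges T \<longleftrightarrow> finite (edges T) \<and> edges T \<subseteq> verts T \<times> verts T"

definition edges_into_steiner :: "stree \<Rightarrow> bool" where
  "edges_into_steiner T \<longleftrightarrow> (\<forall>(u, v) \<in> edges T. v \<in> range Inr)"

lemma cost_eq_sum_edge_length: "cost T = sum (edge_length T) (edges T)"
  unfolding cost_def edge_length_def ..

lemma verts_iff [simp]: "Inl i \<in> verts T \<longleftrightarrow> i < dim T" "Inr j \<in> verts T \<longleftrightarrow> j < nst T"
  unfolding verts_def by auto

lemma terminals_leaves_sadj:
  assumes "terminals_leaves T" and "i < dim T"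
  shows "sadj T i < nst T" and "adj T (Inl i) v \<longleftrightarrow> v = Inr (sadj T i)"
proof -
  obtain j where j: "j < nst T" "\<And>v. adj T (Inl i) v \<longleftrightarrow> v = Inr j"
    using assms unfolding terminals_leaves_def by blast
  then have "sadj T i = j"
    unfolding sadj_def by auto
  with j show "sadj T i < nst T" and "adj T (Inl i) v \<longleftrightarrow> v = Inr (sadj T i)"
    by auto
qed

lemma cost_eq_steiner_cost_plus_terminal_cost:
  assumes W: "well_formed_edges T" and O: "edges_into_steiner T" and L: "terminals_leaves T"
  shows "cost T = steiner_cost T + terminal_cost T"
proof -
  define P :: "(vtx \<times> vtx) set" where "P = (\<lambda>i. (Inl i, Inr (sadj T i))) ` {..<dim T}"
  have terminal_edge: "(Inl i, v) \<in> edges T \<longleftrightarrow> i < dim T \<and> v = Inr (sadj T i)" for i v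
  proof
    assume e: "(Inl i, v) \<in> edges T"
    then have "i < dim T"
      using W unfolding well_formed_edges_def by auto
    with e show "i < dim T \<and> v = Inr (sadj T i)"
      using terminals_leaves_sadj(2)[OF L] unfolding adj_def by blast
  next
    assume "i < dim T \<and> v = Inr (sadj T i)"
    moreover have "(v, Inl i) \<notin> edges T"
      using O unfolding edges_into_steiner_def by auto
    ultimately show "(Inl i, v) \<in> edges T"
      using terminals_leaves_sadj(2)[OF L] unfolding adj_def by blast
  qed
  have "edges T = steiner_edges T \<union> P"
  proof (intro set_eqI iffI)
    fix e assume "e \<in> edges T"
    moreover obtain u b where "e = (u, Inr b)"
      using O \<open>e \<in> edges T\<close> unfolding edges_into_steiner_def by fast
    ultimately show "e \<in> steiner_edges T \<union> P"
      unfolding steiner_edges_def P_def by (cases u) (auto simp: terminal_edge)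
  qed (auto simp: steiner_edges_def P_def terminal_edge)
  moreover have "finite (steiner_edges T)"
    using W unfolding well_formed_edges_def steiner_edges_def by (auto intro: rev_finite_subset)
  moreover have "finite P"
    unfolding P_def by simp
  moreover have "steiner_edges T \<inter> P = {}"
    unfolding steiner_edges_def P_def by blast
  moreover have "sum (edge_length T) P = terminal_cost T"
    unfolding P_def terminal_cost_def
    by (subst sum.reindex) (auto simp: inj_on_def edge_length_def vpos_def)
  ultimately show ?thesis
    unfolding cost_eq_sum_edge_length steiner_cost_def by (simp add: sum.union_disjoint)
qed

lemma steiner_edge_length_doubling:
  assumes D: "is_doubling T T'" and "a < nst T" and "b < nst T"
  shows "edge_length T' (Inr a, Inr b) = edge_length T (Inr a, Inr b) / sqrt 2"
  using assms edist_split_split unfolding is_doubling_def edge_length_def vpos_def by simp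

lemma gadget_length_doubling:
  assumes D: "is_doubling T T'" and i: "i < dim T"
  shows "edge_length T' (Inl (2 * i), Inr (nst T + i)) + edge_length T' (Inl (2 * i + 1), Inr (nst T + i))
           + edge_length T' (Inr (nst T + i), Inr (sadj T i))
         = edist (dim T) (basis i) (spt T (sadj T i)) / sqrt 2 + sqrt 3 / sqrt 2"
proof -
  define m t where "m = dim T" and "t = edist (dim T) (basis i) (spt T (sadj T i))"
  have "sadj T i < nst T"
    using D i terminals_leaves_sadj(1) unfolding is_doubling_def by blast
  then have split_sadj: "spt T' (sadj T i) = split m (spt T (sadj T i))"
    using D unfolding is_doubling_def m_def by blast
  have F: "fermat_point (2 * m) (basis (2 * i)) (basis (2 * i + 1))
             (split m (spt T (sadj T i))) (spt T' (nst T + i))"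
    using D i unfolding is_doubling_def m_def by auto
  have "dim T' = 2 * m"
    using D unfolding is_doubling_def m_def by simp
  then have "edge_length T' (Inl (2 * i), Inr (nst T + i)) + edge_length T' (Inl (2 * i + 1), Inr (nst T + i))
               + edge_length T' (Inr (nst T + i), Inr (sadj T i))
             = sqrt (2/3) + sqrt (2/3) + (sqrt 2 * t - sqrt (2/3)) / 2"
    using fermat_point_doubling_edists[OF i[folded m_def] F] split_sadj
    unfolding edge_length_def vpos_def t_def m_def by simp
  also have "\<dots> = t / sqrt 2 + sqrt 3 / sqrt 2"
    by (simp add: real_sqrt_divide field_simps)
  finally show ?thesis
    unfolding t_def .
qed

lemma edges_doubling:
  assumes "is_doubling T T'"
  shows "edges T' = steiner_edges T \<union> (\<Union>i<dim T. {(Inl (2 * i), Inr (nst T + i)),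
           (Inl (2 * i + 1), Inr (nst T + i)), (Inr (nst T + i), Inr (sadj T i))})"
  using assms unfolding is_doubling_def steiner_edges_def by blast

lemma edges_into_steiner_doubling:
  "is_doubling T T' \<Longrightarrow> edges_into_steiner T'"
  unfolding edges_into_steiner_def edges_doubling steiner_edges_def by auto

lemma well_formed_edges_doubling:
  assumes W: "well_formed_edges T" and D: "is_doubling T T'"
  shows "well_formed_edges T'"
proof -
  have "finite (steiner_edges T)" and "steiner_edges T \<subseteq> verts T \<times> verts T"
    using W unfolding well_formed_edges_def steiner_edges_def by (auto intro: rev_finite_subset)
  moreover have "verts T \<subseteq> verts T'"
    using D unfolding is_doubling_def verts_def by auto
  moreover have "sadj T i < nst T" if "i < dim T" for i
    using D that terminals_leaves_sadj(1) unfolding is_doubling_def by blast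
  ultimately show ?thesis
    using D unfolding well_formed_edges_def edges_doubling[OF D]
    by (auto simp: is_doubling_def)
qed

lemma cost_doubling:
  assumes W: "well_formed_edges T" and D: "is_doubling T T'"
  shows "cost T' = (steiner_cost T + terminal_cost T) / sqrt 2 + dim T * (sqrt 3 / sqrt 2)"
proof -
  define G :: "nat \<Rightarrow> (vtx \<times> vtx) set" where "G i = {(Inl (2 * i), Inr (nst T + i)),
      (Inl (2 * i + 1), Inr (nst T + i)), (Inr (nst T + i), Inr (sadj T i))}" for i
  have fin: "finite (steiner_edges T)"
    using W unfolding well_formed_edges_def steiner_edges_def by (auto intro: rev_finite_subset)
  have steiner_bound: "a < nst T" "b < nst T" if "(Inr a, Inr b) \<in> edges T" for a b
    using W that unfolding well_formed_edges_def by auto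
  have disj: "steiner_edges T \<inter> (\<Union>i<dim T. G i) = {}"
    unfolding G_def steiner_edges_def by (auto dest: steiner_bound)
  have "cost T' = sum (edge_length T') (steiner_edges T) + sum (edge_length T') (\<Union>i<dim T. G i)"
    unfolding cost_eq_sum_edge_length edges_doubling[OF D] G_def[symmetric]
    by (rule sum.union_disjoint[OF fin _ disj]) (simp add: G_def)
  also have "sum (edge_length T') (steiner_edges T) = steiner_cost T / sqrt 2"
    unfolding steiner_cost_def sum_divide_distrib
    by (rule sum.cong) (auto simp: steiner_edges_def steiner_edge_length_doubling[OF D] steiner_bound)
  also have "sum (edge_length T') (\<Union>i<dim T. G i) = (\<Sum>i<dim T. sum (edge_length T') (G i))"
    by (rule sum.UNION_disjoint) (auto simp: G_def)
  also have "\<dots> = (\<Sum>i<dim T. edist (dim T) (basis i) (spt T (sadj T i)) / sqrt 2 + sqrt 3 / sqrt 2)"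
    by (rule sum.cong) (auto simp: G_def gadget_length_doubling[OF D, symmetric])
  finally show ?thesis
    by (simp add: terminal_cost_def sum.distrib sum_divide_distrib add_divide_distrib)
qed

lemma cost_doubling_recurrence:
  assumes "well_formed_edges T" and "edges_into_steiner T" and D: "is_doubling T T'"
  shows "cost T' = cost T / sqrt 2 + dim T * (sqrt 3 / sqrt 2)"
proof -
  have "terminals_leaves T"
    using D unfolding is_doubling_def by blast
  then show ?thesis
    using assms cost_doubling cost_eq_steiner_cost_plus_terminal_cost by simp
qed

lemma affine_recurrence_tendsto:
  fixes x :: "nat \<Rightarrow> real"
  assumes "\<bar>\<rho>\<bar> < 1" and rec: "\<And>k. x (Suc k) = \<rho> * x k + b"
  shows "x \<longlonglongrightarrow> b / (1 - \<rho>)"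
proof -
  define L where "L = b / (1 - \<rho>)"
  have fixed_point: "\<rho> * L + b = L"
    using assms(1) unfolding L_def by (simp add: field_simps)
  have closed_form: "x k = L + \<rho> ^ k * (x 0 - L)" for k
  proof (induction k)
    case (Suc k)
    have "x (Suc k) = (\<rho> * L + b) + \<rho> ^ Suc k * (x 0 - L)"
      unfolding rec Suc.IH by (simp add: algebra_simps)
    then show ?case
      unfolding fixed_point .
  qed simp
  have "(\<lambda>k. L + \<rho> ^ k * (x 0 - L)) \<longlonglongrightarrow> L + 0 * (x 0 - L)"
    using assms(1) by (intro tendsto_intros LIMSEQ_power_zero) simp
  moreover have "(\<lambda>k. L + \<rho> ^ k * (x 0 - L)) = x"
    by (rule ext) (rule closed_form[symmetric])
  ultimately show ?thesis
    unfolding L_def by simp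
qed

lemma ratio_tendsto_if_cost_recurrence:
  fixes c :: "nat \<Rightarrow> real"
  assumes "n > 0" and rec: "\<And>k. c (Suc k) = c k / sqrt 2 + 2 ^ k * n * K"
  shows "(\<lambda>k. c k / ((2 ^ k * n - 1) * sqrt 2)) \<longlonglongrightarrow> K / (2 * sqrt 2 - 1)"
proof -
  define x where "x k = c k / 2 ^ k" for k
  have "(1::real) < sqrt 2"
    by simp
  then have "1 < 2 * sqrt (2::real)"
    by linarith
  have "x (Suc k) = 1 / (2 * sqrt 2) * x k + n * K / 2" for k
    unfolding x_def rec by (simp add: field_simps)
  then have "x \<longlonglongrightarrow> (n * K / 2) / (1 - 1 / (2 * sqrt 2))"
    by (intro affine_recurrence_tendsto) (use \<open>1 < 2 * sqrt 2\<close> in auto)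
  then have "(\<lambda>k. x k / ((n - (1/2) ^ k) * sqrt 2))
      \<longlonglongrightarrow> (n * K / 2) / (1 - 1 / (2 * sqrt 2)) / ((n - 0) * sqrt 2)"
    using \<open>n > 0\<close> by (intro tendsto_intros LIMSEQ_power_zero) auto
  moreover have "x k / ((n - (1/2) ^ k) * sqrt 2) = c k / ((2 ^ k * n - 1) * sqrt 2)" for k
    unfolding x_def by (simp add: field_simps)
  moreover have "(n * K / 2) / (1 - 1 / (2 * sqrt 2)) / ((n - 0) * sqrt 2) = K / (2 * sqrt 2 - 1)"
  proof -
    have "1 - 1 / (2 * sqrt 2) = (2 * sqrt 2 - 1) / (2 * sqrt 2)"
      by (simp add: field_simps)
    then show ?thesis
      using \<open>n > 0\<close> \<open>1 < 2 * sqrt 2\<close> by simp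
  qed
  ultimately show ?thesis
    by simp
qed

theorem mainTheorem13:
  fixes d :: nat and T :: "nat \<Rightarrow> stree"
  assumes "d \<ge> 1"
    and "is_steiner_tree (T 0)" and "dim (T 0) = d"
    and "\<forall>k. is_doubling (T k) (T (Suc k))"
    and "convergent (\<lambda>k. steiner_ratio (T k))"
  shows "(\<lambda>k. steiner_ratio (T k)) \<longlonglongrightarrow> sqrt 3 / (sqrt 2 * (2 * sqrt 2 - 1))"
proof -
  have D: "is_doubling (T k) (T (Suc k))" for k
    using assms(4) by blast
  have dim: "dim (T k) = 2 ^ k * d" for k
    by (induction k) (use assms(3) D in \<open>auto simp: is_doubling_def\<close>)
  have W: "well_formed_edges (T k)" for k
  proof (induction k)
    case 0
    then show ?case
      using assms(2) unfolding is_steiner_tree_def well_formed_edges_def by blast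
  qed (use D well_formed_edges_doubling in blast)
  \<comment> \<open>Only doubled trees are known to store terminal edges terminal-first, so the recurrence
    starts at \<open>T 1\<close>.\<close>
  have "cost (T (Suc (Suc k))) = cost (T (Suc k)) / sqrt 2 + 2 ^ k * real (2 * d) * (sqrt 3 / sqrt 2)" for k
    using cost_doubling_recurrence[OF W edges_into_steiner_doubling[OF D] D] dim by simp
  then have "(\<lambda>k. cost (T (Suc k)) / ((2 ^ k * real (2 * d) - 1) * sqrt 2))
      \<longlonglongrightarrow> sqrt 3 / sqrt 2 / (2 * sqrt 2 - 1)"
    using assms(1) by (intro ratio_tendsto_if_cost_recurrence) auto
  then have "(\<lambda>k. steiner_ratio (T (Suc k))) \<longlonglongrightarrow> sqrt 3 / (sqrt 2 * (2 * sqrt 2 - 1))"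
    by (simp add: steiner_ratio_def dim mult.assoc mult.left_commute)
  then show ?thesis
    by (rule LIMSEQ_imp_Suc)
qed

end
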